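(* Let $A$ be a quasi-quantale and let $d$ be a multiplicative nucleus on $A$. Then the set of fixed points $A_d=\{a\in A\mid d(a)=a\}$ (with the order of $A$, joins $\bigvee^d X=d(\bigvee X)$ and meets as in $A$) is a meet-continuous lattice, i.e. $(\bigvee^d X)\wedge a=\bigvee^d\{x\wedge a\mid x\in X\}$ for every directed $X\subseteq A_d$ and every $a\in A_d$.
   Context: A quasi-quantale is a complete lattice $A$ equipped with an associative binary operation $(a,b)\mapsto ab$ such that for every directed subset $X\subseteq A$ (non-empty, and any two elements of $X$ have an upper bound in $X$) and every $a\in A$: $(\bigvee X)a=\bigvee\{xa\mid x\in X\}$ and $a(\bigvee X)=\bigvee\{ax\mid x\in X\}$. An inflator on $A$ is a monotone map $d\colon A\to A$ with $a\leq d(a)$ for all $a$. A multiplicative nucleus is an inflator $d$ with $d\circ d=d$, $d(a\wedge b)=d(a)\wedge d(b)$ and $d(ab)=d(a)\wedge d(b)$ for all $a,b\in A$. *)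

theory Defs
  imports Main
begin

definition directed :: "'a::order set \<Rightarrow> bool" where
  "directed X \<longleftrightarrow> X \<noteq> {} \<and> (\<forall>x\<in>X. \<forall>y\<in>X. \<exists>z\<in>X. x \<le> z \<and> y \<le> z)"

definition quasi_quantale :: "('a::complete_lattice \<Rightarrow> 'a \<Rightarrow> 'a) \<Rightarrow> bool" where
  "quasi_quantale mult \<longleftrightarrow>
     (\<forall>a b c. mult (mult a b) c = mult a (mult b c)) \<and>
     (\<forall>X a. directed X \<longrightarrow>
        mult (Sup X) a = Sup ((\<lambda>x. mult x a) ` X) \<and>
        mult a (Sup X) = Sup ((\<lambda>x. mult a x) ` X))"

definition inflator :: "('a::order \<Rightarrow> 'a) \<Rightarrow> bool" where
  "inflator d \<longleftrightarrow> mono d \<and> (\<forall>a. a \<le> d a)"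

definition multiplicative_nucleus ::
  "('a::complete_lattice \<Rightarrow> 'a \<Rightarrow> 'a) \<Rightarrow> ('a \<Rightarrow> 'a) \<Rightarrow> bool" where
  "multiplicative_nucleus mult d \<longleftrightarrow>
     inflator d \<and> d \<circ> d = d \<and>
     (\<forall>a b. d (inf a b) = inf (d a) (d b)) \<and>
     (\<forall>a b. d (mult a b) = inf (d a) (d b))"

end

theory Submission
  imports Defs
begin

text \<open>For a directed family \<open>X\<close> of fixed points and a fixed point \<open>a\<close>, the nucleus identity
  \<open>d (x a) = d x \<sqinter> d a\<close> gives \<open>x a \<le> x \<sqinter> a\<close>; distributing the multiplication over the directed
  join \<open>\<Squnion>X\<close> then yields \<open>d (\<Squnion>X) \<sqinter> a = d ((\<Squnion>X) a) \<le> d (\<Squnion>x\<in>X. x \<sqinter> a)\<close>. The reverse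
  inequality only needs monotonicity of \<open>d\<close>.\<close>

lemma multiplicative_nucleus_mult_fixed:
  assumes "multiplicative_nucleus mult d" and "d x = x" and "d a = a"
  shows "d (mult x a) = inf x a"
  using assms unfolding multiplicative_nucleus_def by simp

lemma multiplicative_nucleus_mult_le_inf:
  assumes "multiplicative_nucleus mult d" and "d x = x" and "d a = a"
  shows "mult x a \<le> inf x a"
proof -
  have "mult x a \<le> d (mult x a)"
    using assms(1) unfolding multiplicative_nucleus_def inflator_def by blast
  then show ?thesis
    using multiplicative_nucleus_mult_fixed[OF assms] by simp
qed

lemma mono_Sup_inf_le_inf_Sup:
  fixes d :: "'a::complete_lattice \<Rightarrow> 'a"
  assumes "mono d" and "d a = a"
  shows "d (Sup ((\<lambda>x. inf x a) ` X)) \<le> inf (d (Sup X)) a"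
proof -
  have "Sup ((\<lambda>x. inf x a) ` X) \<le> Sup X" and "Sup ((\<lambda>x. inf x a) ` X) \<le> a"
    by (auto intro!: SUP_least Sup_upper2)
  then show ?thesis
    using assms by (metis le_inf_iff monoD)
qed

lemma quasi_quantale_Sup_mult_le_Sup_inf:
  assumes "quasi_quantale mult" and "multiplicative_nucleus mult d"
    and "directed X" and "X \<subseteq> {x. d x = x}" and "d a = a"
  shows "mult (Sup X) a \<le> Sup ((\<lambda>x. inf x a) ` X)"
proof -
  have "mult (Sup X) a = Sup ((\<lambda>x. mult x a) ` X)"
    using assms(1,3) unfolding quasi_quantale_def by blast
  also have "\<dots> \<le> Sup ((\<lambda>x. inf x a) ` X)"
    using assms(2,4,5) by (intro SUP_mono) (blast intro: multiplicative_nucleus_mult_le_inf)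
  finally show ?thesis .
qed

theorem proposition3p10:
  fixes mult :: "'a::complete_lattice \<Rightarrow> 'a \<Rightarrow> 'a" and d :: "'a \<Rightarrow> 'a"
  assumes "quasi_quantale mult"
    and "multiplicative_nucleus mult d"
  shows "\<forall>X a. directed X \<and> X \<subseteq> {x. d x = x} \<and> d a = a \<longrightarrow>
           inf (d (Sup X)) a = d (Sup ((\<lambda>x. inf x a) ` X))"
proof (intro allI impI)
  fix X a
  assume "directed X \<and> X \<subseteq> {x. d x = x} \<and> d a = a"
  then have X: "directed X" "X \<subseteq> {x. d x = x}" and a: "d a = a" by auto
  have mono: "mono d"
    using assms(2) unfolding multiplicative_nucleus_def inflator_def by blast
  have "inf (d (Sup X)) a = d (mult (Sup X) a)"
    using assms(2) a unfolding multiplicative_nucleus_def by simp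
  also have "\<dots> \<le> d (Sup ((\<lambda>x. inf x a) ` X))"
    using monoD[OF mono quasi_quantale_Sup_mult_le_Sup_inf[OF assms X a]] .
  finally show "inf (d (Sup X)) a = d (Sup ((\<lambda>x. inf x a) ` X))"
    using mono_Sup_inf_le_inf_Sup[OF mono a] by (rule order.antisym)
qed

end
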